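(* Let $(\alpha_n)_{n\ge0}$ be complex numbers with $|\alpha_n|<1$ and let $\mu_{n,r,s}$ be as in the context. For all nonnegative integers $n,r,s$, \[ \mu_{n,r,s}=\sum_{p\in\mathrm{gMot}((-r,r)\to(2n-s,s))}\mathrm{wt}_M(p). \]
   Context: For a polynomial $f(z)=\sum_{k=0}^n a_kz^k$ of degree $n$, write $\overline{f}(z)=\sum_k\overline{a_k}z^k$ and $f^*(z)=z^n\overline{f}(1/z)$. Define monic $\Phi_n$ by $\Phi_0=1$, $\Phi_{n+1}(z)=z\Phi_n(z)-\overline{\alpha_n}\Phi_n^*(z)$. Let $\mathcal{L}$ be the unique linear functional on Laurent polynomials with $\mathcal{L}(1)=1$ and $\mathcal{L}(\Phi_m(z)\overline{\Phi_n}(1/z))=0$ for $m\neq n$; set $\langle f,g\rangle=\mathcal{L}(f(z)\overline{g}(1/z))$ and $\mu_{n,r,s}=\langle\Phi_s(z),z^n\Phi_r(z)\rangle/\langle\Phi_s,\Phi_s\rangle$. Set $\alpha_{-1}=-1$. A gentle Motzkin path is a lattice path in $\mathbb{Z}\times\mathbb{Z}_{\ge0}$ with steps $(1,1)$, $(1,0)$, $(1,-1)$ such that an up-step $(a,b)\to(a+1,b+1)$ occurs only when $a+b$ is even and a down-step $(a,b)\to(a+1,b-1)$ occurs only when $a+b$ is odd. $\mathrm{gMot}((a,b)\to(c,d))$ denotes the set of gentle Motzkin paths from $(a,b)$ to $(c,d)$. The weight $\mathrm{wt}_M(p)$ is the product of step weights: up-step weight $1$; down-step $(a,b)\to(a+1,b-1)$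 weight $1-|\alpha_{b-1}|^2$; horizontal step $(a,b)\to(a+1,b)$ weight $\alpha_b$ if $a+b$ is even and $-\overline{\alpha_{b-1}}$ if $a+b$ is odd. *)

theory Defs
  imports Complex_Main "HOL-Computational_Algebra.Polynomial"
begin

text \<open>Conjugate-reversed polynomial f^*(z) = z^n conj-f(1/z), n = degree f.\<close>
definition polystar :: "complex poly \<Rightarrow> complex poly" where
  "polystar f = (\<Sum>k\<le>degree f. monom (cnj (coeff f (degree f - k))) k)"

fun Phi :: "(nat \<Rightarrow> complex) \<Rightarrow> nat \<Rightarrow> complex poly" where
  "Phi \<alpha> 0 = 1"
| "Phi \<alpha> (Suc n) = [:0, 1:] * Phi \<alpha> n - smult (cnj (\<alpha> n)) (polystar (Phi \<alpha> n))"

text \<open>Laurent polynomials are represented by finitely supported coefficient functions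
  int => complex.  Coefficients of the Laurent polynomial f(z) conj-g(1/z).\<close>
definition lprod :: "complex poly \<Rightarrow> complex poly \<Rightarrow> int \<Rightarrow> complex" where
  "lprod f g k = (\<Sum>i\<le>degree f. \<Sum>j\<le>degree g.
      if int i - int j = k then coeff f i * cnj (coeff g j) else 0)"

text \<open>A linear functional on Laurent polynomials is determined by its moments
  c k = L(z^k); this is the functional with moment sequence c.\<close>
definition Lfun :: "(int \<Rightarrow> complex) \<Rightarrow> (int \<Rightarrow> complex) \<Rightarrow> complex" where
  "Lfun c h = (\<Sum>k | h k \<noteq> 0. h k * c k)"

definition ip :: "(int \<Rightarrow> complex) \<Rightarrow> complex poly \<Rightarrow> complex poly \<Rightarrow> complex" where
  "ip c f g = Lfun c (lprod f g)"

definition mu :: "(int \<Rightarrow> complex) \<Rightarrow> (nat \<Rightarrow> complex) \<Rightarrow> nat \<Rightarrow> nat \<Rightarrow> nat \<Rightarrow> complex" where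
  "mu c \<alpha> n r s = ip c (Phi \<alpha> s) (monom 1 n * Phi \<alpha> r) / ip c (Phi \<alpha> s) (Phi \<alpha> s)"

definition alphaext :: "(nat \<Rightarrow> complex) \<Rightarrow> int \<Rightarrow> complex" where
  "alphaext \<alpha> k = (if k = -1 then -1 else \<alpha> (nat k))"

text \<open>Paths are lists of steps in {1,0,-1} (the change in height), starting at (a,b).\<close>
fun gentle :: "int \<Rightarrow> int \<Rightarrow> int list \<Rightarrow> bool" where
  "gentle a b [] = True"
| "gentle a b (st # ps) =
     (((st = 1 \<and> even (a + b)) \<or> (st = -1 \<and> odd (a + b) \<and> b \<ge> 1) \<or> st = 0)
      \<and> gentle (a + 1) (b + st) ps)"

definition gMot :: "int \<Rightarrow> int \<Rightarrow> int \<Rightarrow> int \<Rightarrow> int list set" where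
  "gMot a b c d = {ps. set ps \<subseteq> {-1, 0, 1} \<and> b \<ge> 0 \<and> gentle a b ps
      \<and> int (length ps) = c - a \<and> b + sum_list ps = d}"

fun wtM :: "(nat \<Rightarrow> complex) \<Rightarrow> int \<Rightarrow> int \<Rightarrow> int list \<Rightarrow> complex" where
  "wtM \<alpha> a b [] = 1"
| "wtM \<alpha> a b (st # ps) =
     (if st = 1 then 1
      else if st = -1 then 1 - complex_of_real ((cmod (alphaext \<alpha> (b - 1)))\<^sup>2)
      else if even (a + b) then alphaext \<alpha> b
      else - cnj (alphaext \<alpha> (b - 1))) * wtM \<alpha> (a + 1) (b + st) ps"

end

theory Submission
  imports Defs
begin

text \<open>
  Fix \<open>K = 2n\<close> and attach to each lattice point \<open>(a, b)\<close> with \<open>b \<ge> 0\<close> and \<open>a + b \<le> K\<close>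
  the polynomial \<open>z^e \<Phi>\<^sub>b\<close> if \<open>a + b\<close> is even and \<open>z^e \<Phi>\<^sub>b\<^sup>*\<close> if \<open>a + b\<close> is odd,
  where \<open>e = (K - a - b) div 2\<close>. At \<open>(-r, r)\<close> this is \<open>z^n \<Phi>\<^sub>r\<close>, and on the line
  \<open>a + b = K\<close> it is \<open>\<Phi>\<^sub>b\<close>. The Szego recursions
  \<open>z \<Phi>\<^sub>b = \<Phi>\<^bsub>b+1\<^esub> + cnj \<alpha>\<^sub>b \<Phi>\<^sub>b\<^sup>*\<close> and
  \<open>\<Phi>\<^sub>b\<^sup>* = (1 - |\<alpha>\<^bsub>b-1\<^esub>|\<^sup>2) \<Phi>\<^bsub>b-1\<^esub>\<^sup>* - \<alpha>\<^bsub>b-1\<^esub> \<Phi>\<^sub>b\<close>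
  (which at \<open>b = 0\<close> reads \<open>\<Phi>\<^sub>0\<^sup>* = \<Phi>\<^sub>0\<close>: this is what the convention \<open>\<alpha>\<^bsub>-1\<^esub> = -1\<close> encodes)
  write the polynomial at \<open>(a, b)\<close> as a combination of the polynomials at the points a gentle
  Motzkin path can step to from \<open>(a, b)\<close>, with the conjugated step weights as coefficients.
  Pairing with \<open>\<Phi>\<^sub>s\<close> and inducting on \<open>K - a\<close>, with orthogonality on the line \<open>a + b = K\<close>
  as the base case, \<open>\<langle>\<Phi>\<^sub>s, z^n \<Phi>\<^sub>r\<rangle>\<close> becomes \<open>\<langle>\<Phi>\<^sub>s, \<Phi>\<^sub>s\<rangle>\<close> times the weighted
  count of gentle Motzkin paths from \<open>(-r, r)\<close> to \<open>(2n - s, s)\<close>. Finally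
  \<open>\<langle>\<Phi>\<^sub>s, \<Phi>\<^sub>s\<rangle> = \<Prod>k<s. 1 - |\<alpha>\<^sub>k|\<^sup>2\<close> is nonzero.
\<close>

section \<open>Reversed polynomials and the Szego recursion\<close>

lemma coeff_polystar:
  "coeff (polystar f) k = (if k \<le> degree f then cnj (coeff f (degree f - k)) else 0)"
  unfolding polystar_def by (simp add: coeff_sum coeff_monom)

lemma degree_polystar_le: "degree (polystar f) \<le> degree f"
  by (rule degree_le) (simp add: coeff_polystar)

lemma polystar_1 [simp]: "polystar 1 = 1"
  by (simp add: polystar_def)

lemma degree_diff_eq_left:
  fixes p q :: "'a::ab_group_add poly"
  shows "degree q < degree p \<Longrightarrow> degree (p - q) = degree p"
  using degree_add_eq_left[of "- q" p] by simp

lemma degree_pCons_0_diff_polystar: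
  assumes "p \<noteq> 0"
  shows "degree (pCons 0 p - smult a (polystar p)) = Suc (degree p)"
proof -
  have "degree (smult a (polystar p)) < degree (pCons 0 p)"
    using assms degree_polystar_le[of p] degree_smult_le[of a "polystar p"]
    by (simp add: degree_pCons_eq)
  then show ?thesis
    using assms by (simp add: degree_diff_eq_left degree_pCons_eq)
qed

lemma polystar_Szego_step:
  assumes "p \<noteq> 0"
  shows "polystar (pCons 0 p - smult a (polystar p)) = polystar p - smult (cnj a) (pCons 0 p)"
proof (rule poly_eqI)
  fix k
  let ?n = "degree p"
  note deg = degree_pCons_0_diff_polystar[OF assms]
  consider "k = 0" | j where "k = Suc j" "j < ?n" | "k = Suc ?n" | "Suc ?n < k"
    by (cases k) (auto, meson linorder_cases)
  then show "coeff (polystar (pCons 0 p - smult a (polystar p))) k =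
      coeff (polystar p - smult (cnj a) (pCons 0 p)) k"
  proof cases
    case 1
    then show ?thesis by (simp add: coeff_polystar deg)
  next
    case (2 j)
    then have "Suc ?n - k = Suc (?n - Suc j)" "?n - (?n - Suc j) = Suc j" by auto
    then show ?thesis using 2 by (simp add: coeff_polystar deg)
  next
    case 3
    then show ?thesis by (simp add: coeff_polystar deg)
  next
    case 4
    then show ?thesis by (simp add: coeff_polystar deg coeff_eq_0)
  qed
qed

lemma Phi_monic: "degree (Phi \<alpha> n) = n \<and> coeff (Phi \<alpha> n) n = 1"
proof (induction n)
  case (Suc n)
  then have "Phi \<alpha> n \<noteq> 0" by auto
  then have "degree (Phi \<alpha> (Suc n)) = Suc n"
    using Suc degree_pCons_0_diff_polystar by simp
  then show ?case
    using Suc degree_polystar_le[of "Phi \<alpha> n"] by (simp add: coeff_eq_0)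
qed simp

lemma degree_Phi [simp]: "degree (Phi \<alpha> n) = n"
  and coeff_Phi_degree [simp]: "coeff (Phi \<alpha> n) n = 1"
  using Phi_monic by blast+

lemma Phi_nonzero: "Phi \<alpha> n \<noteq> 0"
  using coeff_Phi_degree[of \<alpha> n] by (metis coeff_0 zero_neq_one)

lemma pCons_0_Phi:
  "pCons 0 (Phi \<alpha> n) = Phi \<alpha> (Suc n) + smult (cnj (\<alpha> n)) (polystar (Phi \<alpha> n))"
  by simp

lemma polystar_Phi_Suc:
  "polystar (Phi \<alpha> (Suc n)) =
     smult (1 - of_real ((cmod (\<alpha> n))\<^sup>2)) (polystar (Phi \<alpha> n)) - smult (\<alpha> n) (Phi \<alpha> (Suc n))"
proof -
  have "polystar (Phi \<alpha> (Suc n)) = polystar (Phi \<alpha> n) - smult (\<alpha> n) (pCons 0 (Phi \<alpha> n))"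
    using polystar_Szego_step[OF Phi_nonzero, of \<alpha> n "cnj (\<alpha> n)"] by simp
  also have "\<dots> = smult (1 - \<alpha> n * cnj (\<alpha> n)) (polystar (Phi \<alpha> n)) - smult (\<alpha> n) (Phi \<alpha> (Suc n))"
    unfolding pCons_0_Phi by (simp add: smult_add_right smult_diff_left del: Phi.simps)
  finally show ?thesis
    by (simp only: complex_norm_square)
qed

section \<open>The sesquilinear form\<close>

lemma Lfun_eq_sum:
  assumes "finite S" "\<And>k. k \<notin> S \<Longrightarrow> h k = 0"
  shows "Lfun c h = (\<Sum>k\<in>S. h k * c k)"
  unfolding Lfun_def using assms by (intro sum.mono_neutral_left) auto

lemma sum_atMost_degree:
  assumes "degree f \<le> N" "\<And>i. coeff f i = 0 \<Longrightarrow> F i = 0"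
  shows "(\<Sum>i\<le>N. F i) = (\<Sum>i\<le>degree f. F i)"
  using assms by (intro sum.mono_neutral_right) (auto simp: coeff_eq_0)

lemma lprod_eq_sum:
  assumes "degree f \<le> N" "degree g \<le> M"
  shows "lprod f g k =
    (\<Sum>i\<le>N. \<Sum>j\<le>M. if int i - int j = k then coeff f i * cnj (coeff g j) else 0)"
proof -
  have "(\<Sum>j\<le>M. if int i - int j = k then coeff f i * cnj (coeff g j) else 0) =
      (\<Sum>j\<le>degree g. if int i - int j = k then coeff f i * cnj (coeff g j) else 0)" for i
    using assms(2) by (rule sum_atMost_degree) auto
  moreover have "(\<Sum>i\<le>N. \<Sum>j\<le>degree g. if int i - int j = k then coeff f i * cnj (coeff g j) else 0) =
      (\<Sum>i\<le>degree f. \<Sum>j\<le>degree g. if int i - int j = k then coeff f i * cnj (coeff g j) else 0)"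
    using assms(1) by (rule sum_atMost_degree) (simp add: sum.neutral)
  ultimately show ?thesis
    unfolding lprod_def by simp
qed

lemma ip_eq_sum:
  assumes "degree f \<le> N" "degree g \<le> M"
  shows "ip c f g = (\<Sum>i\<le>N. \<Sum>j\<le>M. coeff f i * cnj (coeff g j) * c (int i - int j))"
proof -
  define S where "S = {- int M..int N}"
  have "ip c f g = (\<Sum>k\<in>S. lprod f g k * c k)"
    unfolding ip_def S_def by (rule Lfun_eq_sum) (auto simp: lprod_eq_sum[OF assms] intro!: sum.neutral)
  also have "\<dots> = (\<Sum>i\<le>N. \<Sum>j\<le>M. \<Sum>k\<in>S.
      if int i - int j = k then coeff f i * cnj (coeff g j) * c k else 0)"
    unfolding lprod_eq_sum[OF assms] sum_distrib_right sum.swap[where A = S]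
    by (simp add: if_distrib[where f = "\<lambda>x. x * z" for z] cong: if_cong)
  also have "\<dots> = (\<Sum>i\<le>N. \<Sum>j\<le>M. coeff f i * cnj (coeff g j) * c (int i - int j))"
    by (simp add: S_def)
  finally show ?thesis .
qed

lemma ip_add_left: "ip c (f + g) h = ip c f h + ip c g h"
proof -
  let ?N = "max (degree f) (degree g)"
  have "degree (f + g) \<le> ?N" "degree f \<le> ?N" "degree g \<le> ?N"
    by (simp_all add: degree_add_le_max)
  then show ?thesis
    by (simp add: ip_eq_sum[of _ ?N h "degree h"] sum.distrib[symmetric] ring_distribs)
qed

lemma ip_add_right: "ip c h (f + g) = ip c h f + ip c h g"
proof -
  let ?M = "max (degree f) (degree g)"
  have "degree (f + g) \<le> ?M" "degree f \<le> ?M" "degree g \<le> ?M"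
    by (simp_all add: degree_add_le_max)
  then show ?thesis
    by (simp add: ip_eq_sum[of h "degree h" _ ?M] sum.distrib[symmetric] ring_distribs)
qed

lemma ip_smult_left: "ip c (smult a f) h = a * ip c f h"
  by (simp add: ip_eq_sum[OF degree_smult_le order.refl] ip_eq_sum[OF order.refl order.refl]
      sum_distrib_left ac_simps)

lemma ip_smult_right: "ip c h (smult a f) = cnj a * ip c h f"
  by (simp add: ip_eq_sum[OF order.refl degree_smult_le] ip_eq_sum[OF order.refl order.refl]
      sum_distrib_left ac_simps)

lemma ip_diff_left: "ip c (f - g) h = ip c f h - ip c g h"
  using ip_add_left[of c f "- g" h] ip_smult_left[of c "- 1" g h] by simp

lemma ip_diff_right: "ip c h (f - g) = ip c h f - ip c h g"
  using ip_add_right[of c h f "- g"] ip_smult_right[of c h "- 1" g] by simp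

lemma ip_sum_left: "ip c (sum f A) h = (\<Sum>x\<in>A. ip c (f x) h)"
  using ip_smult_left[of c 0 0 h]
  by (induction A rule: infinite_finite_induct) (simp_all add: ip_add_left)

lemma ip_sum_right: "ip c h (sum f A) = (\<Sum>x\<in>A. ip c h (f x))"
  using ip_smult_right[of c h 0 0]
  by (induction A rule: infinite_finite_induct) (simp_all add: ip_add_right)

lemma ip_1_1: "ip c 1 1 = c 0"
  by (simp add: ip_eq_sum[of 1 0 1 0])

lemma ip_pCons_0: "ip c (pCons 0 f) (pCons 0 g) = ip c f g"
proof -
  have "ip c (pCons 0 f) (pCons 0 g) = (\<Sum>i\<le>Suc (degree f). \<Sum>j\<le>Suc (degree g).
      coeff (pCons 0 f) i * cnj (coeff (pCons 0 g) j) * c (int i - int j))"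
    by (rule ip_eq_sum) (simp_all add: degree_pCons_le)
  also have "\<dots> = ip c f g"
    unfolding sum.atMost_Suc_shift by (simp add: ip_eq_sum[OF order.refl order.refl])
  finally show ?thesis .
qed

lemma sum_atMost_rev: "(\<Sum>i\<le>n. F i) = (\<Sum>i\<le>(n::nat). F (n - i))"
  using sum.atLeastAtMost_rev[of F 0 n] by (simp add: atLeast0AtMost)

lemma ip_polystar:
  assumes "degree f = n" "degree g = n"
  shows "ip c (polystar f) (polystar g) = ip c g f"
proof -
  have "ip c (polystar f) (polystar g) =
      (\<Sum>i\<le>n. \<Sum>j\<le>n. cnj (coeff f (n - i)) * coeff g (n - j) * c (int i - int j))"
    unfolding ip_eq_sum[OF degree_polystar_le degree_polystar_le] assms
    by (intro sum.cong refl) (simp add: coeff_polystar assms)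
  also have "\<dots> = (\<Sum>i\<le>n. \<Sum>j\<le>n. cnj (coeff f i) * coeff g j * c (int j - int i))"
    by (subst sum_atMost_rev, subst (2) sum_atMost_rev) (simp add: of_nat_diff)
  also have "\<dots> = ip c g f"
    using assms by (subst sum.swap) (simp add: ip_eq_sum[of g n f n] ac_simps)
  finally show ?thesis .
qed

section \<open>Orthogonality and norms\<close>

lemma monic_basis_expansion:
  fixes P :: "nat \<Rightarrow> 'a::comm_ring_1 poly"
  assumes deg: "\<And>k. degree (P k) = k" and monic: "\<And>k. coeff (P k) k = 1"
  shows "degree g \<le> d \<Longrightarrow> \<exists>x. g = (\<Sum>k\<le>d. smult (x k) (P k))"
proof (induction d arbitrary: g)
  case 0
  have "P 0 = 1" "g = [:coeff g 0:]"
    using degree_0_id[of "P 0"] degree_0_id[of g] 0 deg monic by (auto simp: one_pCons)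
  then have "g = smult (coeff g 0) (P 0)" by simp
  then show ?case by auto
next
  case (Suc d)
  define h where "h = g - smult (coeff g (Suc d)) (P (Suc d))"
  have "degree h \<le> d"
  proof (rule degree_le, intro allI impI)
    fix i assume "d < i"
    then consider "i = Suc d" | "Suc d < i" by linarith
    then show "coeff h i = 0"
      using Suc.prems by cases (simp_all add: h_def monic coeff_eq_0 deg)
  qed
  then obtain x where x: "h = (\<Sum>k\<le>d. smult (x k) (P k))"
    using Suc.IH by blast
  have "g = (\<Sum>k\<le>Suc d. smult ((x(Suc d := coeff g (Suc d))) k) (P k))"
    using x by (simp add: h_def algebra_simps)
  then show ?case by blast
qed

lemma ip_Phi_degree_less:
  assumes orth: "\<And>m k. m \<noteq> k \<Longrightarrow> ip c (Phi \<alpha> m) (Phi \<alpha> k) = 0"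
    and "degree g < m"
  shows "ip c (Phi \<alpha> m) g = 0"
proof -
  have "degree g \<le> m - 1"
    using assms(2) by linarith
  then obtain x where "g = (\<Sum>k\<le>m - 1. smult (x k) (Phi \<alpha> k))"
    using monic_basis_expansion[of "Phi \<alpha>"] by auto
  then show ?thesis
    using assms(2) by (auto simp: ip_sum_right ip_smult_right orth intro!: sum.neutral)
qed

lemma ip_degree_less_Phi:
  assumes orth: "\<And>m k. m \<noteq> k \<Longrightarrow> ip c (Phi \<alpha> m) (Phi \<alpha> k) = 0"
    and "degree g < m"
  shows "ip c g (Phi \<alpha> m) = 0"
proof -
  have "degree g \<le> m - 1"
    using assms(2) by linarith
  then obtain x where "g = (\<Sum>k\<le>m - 1. smult (x k) (Phi \<alpha> k))"
    using monic_basis_expansion[of "Phi \<alpha>"] by auto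
  then show ?thesis
    using assms(2) by (auto simp: ip_sum_left ip_smult_left orth intro!: sum.neutral)
qed

lemma ip_Phi_Phi:
  assumes orth: "\<And>m k. m \<noteq> k \<Longrightarrow> ip c (Phi \<alpha> m) (Phi \<alpha> k) = 0"
  shows "ip c (Phi \<alpha> n) (Phi \<alpha> n) = c 0 * (\<Prod>k<n. 1 - of_real ((cmod (\<alpha> k))\<^sup>2))"
proof (induction n)
  case 0
  then show ?case by (simp add: ip_1_1)
next
  case (Suc n)
  define P where "P = Phi \<alpha> n"
  define Q where "Q = Phi \<alpha> (Suc n)"
  define a where "a = \<alpha> n"
  have Q: "Q = pCons 0 P - smult (cnj a) (polystar P)"
    and zP: "pCons 0 P = Q + smult (cnj a) (polystar P)"
    by (simp_all add: P_def Q_def a_def)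
  have degP: "degree P = n"
    by (simp add: P_def)
  have "degree (polystar P) < Suc n"
    using degree_polystar_le[of P] degP by simp
  then have QP: "ip c Q (polystar P) = 0" and PQ: "ip c (polystar P) Q = 0"
    unfolding Q_def using ip_Phi_degree_less[OF orth] ip_degree_less_Phi[OF orth] by blast+
  have "ip c Q Q = ip c Q (pCons 0 P)"
    by (subst (2) Q) (simp add: ip_diff_right ip_smult_right QP)
  also have "\<dots> = ip c (pCons 0 P) (pCons 0 P) - cnj a * ip c (polystar P) (pCons 0 P)"
    by (subst (1) Q) (simp add: ip_diff_left ip_smult_left)
  also have "ip c (polystar P) (pCons 0 P) = a * ip c P P"
    unfolding zP by (simp add: ip_add_right ip_smult_right PQ ip_polystar[OF degP degP])
  finally have "ip c Q Q = (1 - cnj a * a) * ip c P P"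
    by (simp add: ip_pCons_0 algebra_simps)
  moreover have "cnj a * a = of_real ((cmod a)\<^sup>2)"
    using complex_norm_square[of a] by (simp only: mult.commute)
  ultimately show ?case
    using Suc.IH unfolding P_def Q_def a_def by (simp only: prod.lessThan_Suc ac_simps)
qed

lemma ip_Phi_Phi_nonzero:
  assumes orth: "\<And>m k. m \<noteq> k \<Longrightarrow> ip c (Phi \<alpha> m) (Phi \<alpha> k) = 0"
    and "c 0 \<noteq> 0" "\<And>k. cmod (\<alpha> k) < 1"
  shows "ip c (Phi \<alpha> n) (Phi \<alpha> n) \<noteq> 0"
proof -
  have "(cmod (\<alpha> k))\<^sup>2 \<noteq> 1" for k
    using assms(3)[of k] abs_square_less_1[of "cmod (\<alpha> k)"] by simp
  then have "1 - complex_of_real ((cmod (\<alpha> k))\<^sup>2) \<noteq> 0" for k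
    by (metis of_real_1 of_real_eq_iff right_minus_eq)
  then show ?thesis
    using assms(2) by (simp add: ip_Phi_Phi[OF orth])
qed

section \<open>Gentle Motzkin paths\<close>

lemma Cons_in_gMot:
  "st # ps \<in> gMot a b c d \<longleftrightarrow> 0 \<le> b \<and>
    (st = 1 \<and> even (a + b) \<or> st = -1 \<and> odd (a + b) \<and> 1 \<le> b \<or> st = 0) \<and>
    ps \<in> gMot (a + 1) (b + st) c d"
  unfolding gMot_def by auto

lemma Nil_in_gMot: "[] \<in> gMot a b c d \<longleftrightarrow> 0 \<le> b \<and> c = a \<and> d = b"
  unfolding gMot_def by auto

lemma gMot_height_nonneg: "ps \<in> gMot a b c d \<Longrightarrow> 0 \<le> b"
  unfolding gMot_def by auto

lemma gMot_level_le: "ps \<in> gMot a b c d \<Longrightarrow> a + b \<le> c + d"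
proof (induction ps arbitrary: a b)
  case Nil
  then show ?case by (simp add: Nil_in_gMot)
next
  case (Cons st ps)
  then have "a + 1 + (b + st) \<le> c + d" "-1 \<le> st"
    by (auto simp: Cons_in_gMot)
  then show ?case by linarith
qed

lemma finite_gMot: "finite (gMot a b c d)"
proof -
  have "gMot a b c d \<subseteq> {ps. set ps \<subseteq> {-1, 0, 1} \<and> length ps = nat (c - a)}"
    unfolding gMot_def by auto
  then show ?thesis
    using finite_lists_length_eq[of "{-1, 0, 1::int}"] finite_subset by blast
qed

lemma gMot_even_step:
  assumes "a + b < c + d" "0 \<le> b" "even (a + b)"
  shows "gMot a b c d = Cons 1 ` gMot (a + 1) (b + 1) c d \<union> Cons 0 ` gMot (a + 1) b c d"
proof (rule set_eqI)
  fix ps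
  show "ps \<in> gMot a b c d \<longleftrightarrow>
      ps \<in> Cons 1 ` gMot (a + 1) (b + 1) c d \<union> Cons 0 ` gMot (a + 1) b c d"
    using assms by (cases ps) (auto simp: Nil_in_gMot Cons_in_gMot)
qed

lemma gMot_odd_step:
  assumes "a + b < c + d" "odd (a + b)"
  shows "gMot a b c d = Cons (-1) ` gMot (a + 1) (b - 1) c d \<union> Cons 0 ` gMot (a + 1) b c d"
proof (rule set_eqI)
  fix ps
  show "ps \<in> gMot a b c d \<longleftrightarrow>
      ps \<in> Cons (-1) ` gMot (a + 1) (b - 1) c d \<union> Cons 0 ` gMot (a + 1) b c d"
    using assms by (cases ps) (auto simp: Nil_in_gMot Cons_in_gMot dest: gMot_height_nonneg)
qed

lemma gMot_same_level_even:
  assumes "even (a + b)" "a + b = c + d" "0 \<le> b"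
  shows "gMot a b c d = (if d = b then {[]} else {})"
proof -
  have "ps = []" if "ps \<in> gMot a b c d" for ps
  proof (cases ps)
    case (Cons st qs)
    then have "0 \<le> st" "a + 1 + (b + st) \<le> c + d"
      using that assms(1) gMot_level_le[of qs "a + 1" "b + st" c d] by (auto simp: Cons_in_gMot)
    then show ?thesis using assms(2) by linarith
  qed
  then have "gMot a b c d \<subseteq> {[]}"
    by blast
  moreover have "[] \<in> gMot a b c d \<longleftrightarrow> d = b"
    using assms by (auto simp: Nil_in_gMot)
  ultimately show ?thesis
    by auto
qed

lemma alphaext_of_nat [simp]: "alphaext \<alpha> (int n) = \<alpha> n"
  by (simp add: alphaext_def)

lemma alphaext_minus_1 [simp]: "alphaext \<alpha> (-1) = -1"
  by (simp add: alphaext_def)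

definition gMot_sum :: "(nat \<Rightarrow> complex) \<Rightarrow> int \<Rightarrow> int \<Rightarrow> int \<Rightarrow> int \<Rightarrow> complex" where
  "gMot_sum \<alpha> a b c d = (\<Sum>p\<in>gMot a b c d. wtM \<alpha> a b p)"

lemma sum_Cons_image: "(\<Sum>p\<in>Cons st ` A. f p) = (\<Sum>p\<in>A. f (st # p))"
  by (simp add: sum.reindex)

lemma wtM_up: "wtM \<alpha> a b (1 # p) = wtM \<alpha> (a + 1) (b + 1) p"
  by simp

lemma wtM_flat:
  "wtM \<alpha> a b (0 # p) =
    (if even (a + b) then alphaext \<alpha> b else - cnj (alphaext \<alpha> (b - 1))) * wtM \<alpha> (a + 1) b p"
  by simp

lemma wtM_down:
  "wtM \<alpha> a b (-1 # p) = (1 - of_real ((cmod (alphaext \<alpha> (b - 1)))\<^sup>2)) * wtM \<alpha> (a + 1) (b - 1) p"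
  by simp

lemma gMot_sum_even_step:
  assumes "a + b < c + d" "0 \<le> b" "even (a + b)"
  shows "gMot_sum \<alpha> a b c d =
    gMot_sum \<alpha> (a + 1) (b + 1) c d + alphaext \<alpha> b * gMot_sum \<alpha> (a + 1) b c d"
proof -
  have "gMot_sum \<alpha> a b c d =
      (\<Sum>p\<in>gMot (a + 1) (b + 1) c d. wtM \<alpha> a b (1 # p)) +
      (\<Sum>p\<in>gMot (a + 1) b c d. wtM \<alpha> a b (0 # p))"
    unfolding gMot_sum_def gMot_even_step[OF assms]
    by (subst sum.union_disjoint) (auto simp: finite_gMot sum_Cons_image simp del: wtM.simps)
  then show ?thesis
    using assms(3) by (simp only: wtM_up wtM_flat if_True sum_distrib_left gMot_sum_def)
qed

lemma gMot_sum_odd_step: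
  assumes "a + b < c + d" "odd (a + b)"
  shows "gMot_sum \<alpha> a b c d =
    (1 - of_real ((cmod (alphaext \<alpha> (b - 1)))\<^sup>2)) * gMot_sum \<alpha> (a + 1) (b - 1) c d
    - cnj (alphaext \<alpha> (b - 1)) * gMot_sum \<alpha> (a + 1) b c d"
proof -
  have "gMot_sum \<alpha> a b c d =
      (\<Sum>p\<in>gMot (a + 1) (b - 1) c d. wtM \<alpha> a b (-1 # p)) +
      (\<Sum>p\<in>gMot (a + 1) b c d. wtM \<alpha> a b (0 # p))"
    unfolding gMot_sum_def gMot_odd_step[OF assms]
    by (subst sum.union_disjoint) (auto simp: finite_gMot sum_Cons_image simp del: wtM.simps)
  then show ?thesis
    using assms(2)
    by (simp add: wtM_down wtM_flat sum_distrib_left gMot_sum_def sum_negf del: wtM.simps)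
qed

lemma gMot_sum_same_level_even:
  assumes "even (a + b)" "a + b = c + d" "0 \<le> b"
  shows "gMot_sum \<alpha> a b c d = (if d = b then 1 else 0)"
  unfolding gMot_sum_def gMot_same_level_even[OF assms] by simp

section \<open>Polynomials attached to lattice points\<close>

definition lattice_poly :: "(nat \<Rightarrow> complex) \<Rightarrow> int \<Rightarrow> int \<Rightarrow> nat \<Rightarrow> complex poly" where
  "lattice_poly \<alpha> K a b = monom 1 (nat ((K - a - int b) div 2)) *
    (if even (a + int b) then Phi \<alpha> b else polystar (Phi \<alpha> b))"

lemma lattice_poly_on_level:
  assumes "even K" "a + int b = K"
  shows "lattice_poly \<alpha> K a b = Phi \<alpha> b"
  using assms by (simp add: lattice_poly_def)

lemma lattice_poly_even_step:
  assumes "even K" "even (a + int b)" "a + int b < K"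
  shows "lattice_poly \<alpha> K a b =
    lattice_poly \<alpha> K (a + 1) (Suc b) + smult (cnj (\<alpha> b)) (lattice_poly \<alpha> K (a + 1) b)"
proof -
  define e where "e = (K - a - int b) div 2"
  have "(K - (a + 1) - int (Suc b)) div 2 = e - 1" "(K - (a + 1) - int b) div 2 = e - 1" "1 \<le> e"
    unfolding e_def using assms by presburger+
  then obtain m where "nat ((K - a - int b) div 2) = Suc m"
    "nat ((K - (a + 1) - int (Suc b)) div 2) = m" "nat ((K - (a + 1) - int b) div 2) = m"
    unfolding e_def[symmetric] by (intro that[of "nat (e - 1)"]) auto
  moreover have "monom 1 (Suc m) * Phi \<alpha> b = monom 1 m * pCons 0 (Phi \<alpha> b)"
    by (simp add: monom_Suc del: Phi.simps)
  ultimately show ?thesis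
    using assms unfolding lattice_poly_def pCons_0_Phi by (simp add: algebra_simps del: Phi.simps)
qed

lemma lattice_poly_odd_step:
  assumes "even K" "odd (a + int (Suc b))" "a + int (Suc b) \<le> K"
  shows "lattice_poly \<alpha> K a (Suc b) =
    smult (1 - of_real ((cmod (\<alpha> b))\<^sup>2)) (lattice_poly \<alpha> K (a + 1) b)
    - smult (\<alpha> b) (lattice_poly \<alpha> K (a + 1) (Suc b))"
proof -
  have "(K - (a + 1) - int b) div 2 = (K - a - int (Suc b)) div 2"
    "(K - (a + 1) - int (Suc b)) div 2 = (K - a - int (Suc b)) div 2"
    using assms by presburger+
  then show ?thesis
    using assms unfolding lattice_poly_def polystar_Phi_Suc by (simp add: algebra_simps del: Phi.simps)
qed

lemma lattice_poly_odd_0: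
  assumes "even K" "odd a"
  shows "lattice_poly \<alpha> K a 0 = lattice_poly \<alpha> K (a + 1) 0"
proof -
  have "(K - (a + 1)) div 2 = (K - a) div 2"
    using assms by presburger
  then show ?thesis
    using assms by (simp add: lattice_poly_def)
qed

lemma ip_Phi_lattice_poly:
  assumes orth: "\<And>m k. m \<noteq> k \<Longrightarrow> ip c (Phi \<alpha> m) (Phi \<alpha> k) = 0"
    and "even K" "a + int b \<le> K"
  shows "ip c (Phi \<alpha> s) (lattice_poly \<alpha> K a b) =
    gMot_sum \<alpha> a (int b) (K - int s) (int s) * ip c (Phi \<alpha> s) (Phi \<alpha> s)"
  using assms(3)
proof (induction "nat (K - a)" arbitrary: a b rule: less_induct)
  case less
  let ?G = "\<lambda>a b. gMot_sum \<alpha> a b (K - int s) (int s)"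
  let ?N = "ip c (Phi \<alpha> s) (Phi \<alpha> s)"
  have IH: "ip c (Phi \<alpha> s) (lattice_poly \<alpha> K (a + 1) b') = ?G (a + 1) (int b') * ?N"
    if "a + 1 + int b' \<le> K" for b'
    using less.hyps[of "a + 1" b'] that by simp
  consider "even (a + int b)" "a + int b = K" | "even (a + int b)" "a + int b < K"
    | "odd (a + int b)" "b = 0" | b' where "odd (a + int b)" "b = Suc b'"
    using less.prems by (cases b) fastforce+
  then show ?case
  proof cases
    case 1
    then show ?thesis
      using orth[of s b] by (simp add: lattice_poly_on_level assms(2) gMot_sum_same_level_even)
  next
    case 2
    have "a + 1 + int (Suc b) \<le> K" "a + 1 + int b \<le> K"
      using 2 assms(2) by presburger+
    then have "ip c (Phi \<alpha> s) (lattice_poly \<alpha> K a b) =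
        (?G (a + 1) (int b + 1) + alphaext \<alpha> (int b) * ?G (a + 1) (int b)) * ?N"
      using IH
      by (simp add: lattice_poly_even_step[OF assms(2) 2] ip_add_right ip_smult_right algebra_simps)
    also have "?G (a + 1) (int b + 1) + alphaext \<alpha> (int b) * ?G (a + 1) (int b) = ?G a (int b)"
      using 2 by (intro gMot_sum_even_step[symmetric]) simp_all
    finally show ?thesis .
  next
    case 3
    then have "a + 1 \<le> K" "a < K - int s + int s"
      using less.prems assms(2) by presburger+
    then show ?thesis
      using 3 IH[of 0] gMot_sum_odd_step[of a 0 "K - int s" "int s" \<alpha>]
      by (simp add: lattice_poly_odd_0[OF assms(2)])
  next
    case 4
    have "a + 1 + int b' \<le> K" "a + 1 + int (Suc b') \<le> K"
      and below: "a + int b < K - int s + int s"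
      using 4 less.prems assms(2) by presburger+
    then have "ip c (Phi \<alpha> s) (lattice_poly \<alpha> K a b) =
        ((1 - of_real ((cmod (\<alpha> b'))\<^sup>2)) * ?G (a + 1) (int b')
          - cnj (\<alpha> b') * ?G (a + 1) (int (Suc b'))) * ?N"
      using IH 4 less.prems
      by (simp add: lattice_poly_odd_step[OF assms(2)] ip_diff_right ip_smult_right algebra_simps)
    also have "(1 - of_real ((cmod (\<alpha> b'))\<^sup>2)) * ?G (a + 1) (int b')
        - cnj (\<alpha> b') * ?G (a + 1) (int (Suc b')) = ?G a (int b)"
      using 4 gMot_sum_odd_step[OF below] by simp
    finally show ?thesis .
  qed
qed

theorem theorem3p7:
  fixes \<alpha> :: "nat \<Rightarrow> complex" and c :: "int \<Rightarrow> complex" and n r s :: nat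
  assumes "\<forall>k. cmod (\<alpha> k) < 1"
    and "c 0 = 1"
    and "\<forall>m k. m \<noteq> k \<longrightarrow> ip c (Phi \<alpha> m) (Phi \<alpha> k) = 0"
  shows "mu c \<alpha> n r s =
    (\<Sum>p\<in>gMot (- int r) (int r) (2 * int n - int s) (int s). wtM \<alpha> (- int r) (int r) p)"
proof -
  note orth = assms(3)[rule_format]
  have "lattice_poly \<alpha> (2 * int n) (- int r) r = monom 1 n * Phi \<alpha> r"
    by (simp add: lattice_poly_def)
  then have "ip c (Phi \<alpha> s) (monom 1 n * Phi \<alpha> r) =
      gMot_sum \<alpha> (- int r) (int r) (2 * int n - int s) (int s) * ip c (Phi \<alpha> s) (Phi \<alpha> s)"
    using ip_Phi_lattice_poly[OF orth, of "2 * int n" "- int r" r s] by simp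
  moreover have "ip c (Phi \<alpha> s) (Phi \<alpha> s) \<noteq> 0"
    using assms(1,2) by (intro ip_Phi_Phi_nonzero[OF orth]) simp_all
  ultimately show ?thesis
    by (simp add: mu_def gMot_sum_def)
qed

end
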